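(* Let $(M,A)$ be a $d$-dimensional BUT-manifold. Then $M$ cannot be covered by $d+1$ closed sets none of which contains a pair $(x,A(x))$ of antipodal points.
   Context: A BUT (Borsuk–Ulam type) manifold is a pair $(M,A)$ where $M$ is a connected compact piecewise-linear $d$-dimensional manifold without boundary and $A:M\to M$ is a free simplicial involution ($A(A(x))=x$, $A(x)\neq x$), such that for every continuous $g:M\to\mathbb{R}^d$ there is $x\in M$ with $g(A(x))=g(x)$. *)

theory Defs
  imports "HOL-Analysis.Analysis"
begin

definition free_involution :: "'a set \<Rightarrow> ('a \<Rightarrow> 'a) \<Rightarrow> bool" where
  "free_involution M A \<longleftrightarrow> (\<forall>x\<in>M. A x \<in> M \<and> A (A x) = x \<and> A x \<noteq> x)"

definition simplicial_map_on :: "'a::euclidean_space set set \<Rightarrow> ('a \<Rightarrow> 'a) \<Rightarrow> bool" where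
  "simplicial_map_on \<T> A \<longleftrightarrow>
     (\<forall>T\<in>\<T>. A ` T \<in> \<T> \<and>
        (\<forall>x\<in>T. \<forall>y\<in>T. \<forall>u::real. 0 \<le> u \<and> u \<le> 1 \<longrightarrow>
            A ((1 - u) *\<^sub>R x + u *\<^sub>R y) = (1 - u) *\<^sub>R A x + u *\<^sub>R A y))"

text \<open>Closed (compact) d-manifold without boundary: every point has an open
  neighbourhood homeomorphic to an open d-ball (of some d-dimensional linear subspace,
  i.e. a copy of R^d).\<close>
definition closed_manifold :: "nat \<Rightarrow> 'a::euclidean_space set \<Rightarrow> bool" where
  "closed_manifold d M \<longleftrightarrow> compact M \<and>
     (\<forall>x\<in>M. \<exists>U (S::'a set). openin (top_of_set M) U \<and> x \<in> U \<and> subspace S \<and> dim S = d \<and>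
                    U homeomorphic (ball 0 1 \<inter> S))"

text \<open>Borsuk-Ulam property: every continuous map from M to R^d (realised as any
  d-dimensional linear subspace S of the ambient space) identifies some pair x, A x.\<close>
definition BU_property :: "nat \<Rightarrow> 'a::euclidean_space set \<Rightarrow> ('a \<Rightarrow> 'a) \<Rightarrow> bool" where
  "BU_property d M A \<longleftrightarrow>
     (\<forall>S (g::'a \<Rightarrow> 'a). subspace S \<and> dim S = d \<and> continuous_on M g \<and> g ` M \<subseteq> S
        \<longrightarrow> (\<exists>x\<in>M. g (A x) = g x))"

definition BUT_manifold :: "nat \<Rightarrow> 'a::euclidean_space set \<Rightarrow> ('a \<Rightarrow> 'a) \<Rightarrow> bool" where
  "BUT_manifold d M A \<longleftrightarrow>
     M \<noteq> {} \<and> connected M \<and> closed_manifold d M \<and>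
     (\<exists>\<T>. triangulation \<T> \<and> \<Union>\<T> = M \<and> simplicial_map_on \<T> A) \<and>
     free_involution M A \<and> BU_property d M A"

end

theory Submission
  imports Defs
begin

text \<open>If closed sets \<open>F 0, \<dots>, F d\<close> cover \<open>M\<close> and none contains an antipodal pair, map
  \<open>x\<close> to the vector of distances \<open>(dist(x, F 1), \<dots>, dist(x, F d))\<close> in a \<open>d\<close>-dimensional
  subspace. The Borsuk-Ulam property yields \<open>x\<close> with the same distances as \<open>A x\<close>.
  Since each \<open>F i\<close> is closed, a zero distance means membership; so for \<open>i \<ge> 1\<close> neither
  \<open>x\<close> nor \<open>A x\<close> lies in \<open>F i\<close>, and both must lie in \<open>F 0\<close>, a contradiction.\<close>

lemma inner_sum_orthonormal_family:
  fixes b :: "'i \<Rightarrow> 'a::real_inner"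
  assumes "finite I" "inj_on b I" "pairwise orthogonal (b ` I)"
    and "\<And>i. i \<in> I \<Longrightarrow> norm (b i) = 1" and "j \<in> I"
  shows "(\<Sum>i\<in>I. c i *\<^sub>R b i) \<bullet> b j = c j"
proof -
  have orth: "b i \<bullet> b j = 0" if "i \<in> I - {j}" for i
  proof -
    have "b i \<noteq> b j" using that assms(2,5) inj_onD by fastforce
    then show ?thesis
      using that assms(3,5) by (simp add: pairwise_def orthogonal_def)
  qed
  have unit: "b j \<bullet> b j = 1" using assms(4,5) by (simp add: norm_eq_1)
  have "(\<Sum>i\<in>I. c i *\<^sub>R b i) \<bullet> b j = (\<Sum>i\<in>I. c i * (b i \<bullet> b j))"
    by (simp add: inner_sum_left)
  also have "\<dots> = c j * (b j \<bullet> b j) + (\<Sum>i\<in>I - {j}. c i * (b i \<bullet> b j))"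
    using assms(1,5) by (simp add: sum.remove)
  finally show ?thesis
    using orth unit by simp
qed

lemma exists_map_into_subspace_determining_functions:
  fixes S :: "'a::euclidean_space set" and f :: "nat \<Rightarrow> 'b::topological_space \<Rightarrow> real"
  assumes "subspace S" "dim S = d" and cont: "\<And>i. i \<in> {1..d} \<Longrightarrow> continuous_on M (f i)"
  obtains g where "continuous_on M g" "g ` M \<subseteq> S"
    "\<And>x y. g x = g y \<Longrightarrow> \<forall>i\<in>{1..d}. f i x = f i y"
proof -
  obtain B where B: "B \<subseteq> S" "pairwise orthogonal B" "\<And>x. x \<in> B \<Longrightarrow> norm x = 1"
    "independent B" "card B = dim S"
    using orthonormal_basis_subspace[OF assms(1)] by blast
  obtain b where "bij_betw b {1..d} B"
    using ex_bij_betw_nat_finite_1 B(4,5) assms(2) independent_imp_finite by metis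
  then have b: "inj_on b {1..d}" "b ` {1..d} = B"
    by (auto simp: bij_betw_def)
  define g where "g x = (\<Sum>i\<in>{1..d}. f i x *\<^sub>R b i)" for x
  show thesis
  proof
    show "continuous_on M g"
      unfolding g_def by (intro continuous_intros cont)
    show "g ` M \<subseteq> S"
      using b(2) B(1) unfolding g_def
      by (auto intro!: subspace_sum[OF assms(1)] subspace_mul[OF assms(1)])
    have "g x \<bullet> b j = f j x" if "j \<in> {1..d}" for x j
      unfolding g_def using b B(2,3) that
      by (intro inner_sum_orthonormal_family) auto
    then show "\<forall>i\<in>{1..d}. f i x = f i y" if "g x = g y" for x y
      using that by metis
  qed
qed

lemma BU_property_common_coincidence:
  fixes A :: "'a::euclidean_space \<Rightarrow> 'a" and f :: "nat \<Rightarrow> 'a \<Rightarrow> real"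
  assumes "BU_property d M A" "d \<le> DIM('a)"
    and "\<And>i. i \<in> {1..d} \<Longrightarrow> continuous_on M (f i)"
  obtains x where "x \<in> M" "\<forall>i\<in>{1..d}. f i (A x) = f i x"
proof -
  obtain S :: "'a set" where S: "subspace S" "dim S = d"
    using choose_subspace_of_subspace[of d "UNIV :: 'a set"] assms(2) by (auto simp: dim_UNIV)
  obtain g where "continuous_on M g" "g ` M \<subseteq> S"
    and g: "\<And>x y. g x = g y \<Longrightarrow> \<forall>i\<in>{1..d}. f i x = f i y"
    using exists_map_into_subspace_determining_functions[where f = f, OF S assms(3)] by blast
  then obtain x where "x \<in> M" "g (A x) = g x"
    using assms(1) S unfolding BU_property_def by blast
  with g that show thesis by blast
qed

lemma BU_property_no_antipodal_free_closed_cover: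
  fixes A :: "'a::euclidean_space \<Rightarrow> 'a"
  assumes "BU_property d M A" "d \<le> DIM('a)" "A ` M \<subseteq> M"
    and closed: "\<And>i. i \<le> d \<Longrightarrow> closedin (top_of_set M) (F i)"
    and cover: "M \<subseteq> (\<Union>i\<le>d. F i)"
    and antipodal_free: "\<And>i x. i \<le> d \<Longrightarrow> x \<in> M \<Longrightarrow> x \<in> F i \<Longrightarrow> A x \<notin> F i"
  shows False
proof -
  obtain x where x: "x \<in> M"
    and same_dist: "\<forall>i\<in>{1..d}. setdist {A x} (F i) = setdist {x} (F i)"
    using BU_property_common_coincidence[OF assms(1,2) continuous_on_setdist] by metis
  have Ax: "A x \<in> M" using x assms(3) by blast
  have not_in: "y \<notin> F i" if "y \<in> {x, A x}" "i \<in> {1..d}" for y i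
  proof
    assume "y \<in> F i"
    have mem_iff: "z \<in> F i \<longleftrightarrow> setdist {z} (F i) = 0" if "z \<in> M" for z
      using setdist_eq_0_closedin[OF closed \<open>z \<in> M\<close>, of i] \<open>i \<in> {1..d}\<close> \<open>y \<in> F i\<close> by auto
    have "x \<in> F i" "A x \<in> F i"
      using \<open>y \<in> F i\<close> \<open>y \<in> {x, A x}\<close> same_dist \<open>i \<in> {1..d}\<close> mem_iff[OF x] mem_iff[OF Ax] by auto
    then show False using antipodal_free \<open>i \<in> {1..d}\<close> x by auto
  qed
  have "y \<in> F 0" if "y \<in> {x, A x}" for y
  proof -
    have "y \<in> M" using that x Ax by blast
    then obtain i where "i \<le> d" "y \<in> F i" using cover by blast
    with not_in[OF that] show ?thesis by (cases "i = 0") auto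
  qed
  then show False using antipodal_free x by blast
qed

theorem mainTheorem8:
  fixes M :: "'a::euclidean_space set" and A :: "'a \<Rightarrow> 'a" and d :: nat
  assumes "BUT_manifold d M A"
  shows "\<not> (\<exists>F :: nat \<Rightarrow> 'a set.
              (\<forall>i\<le>d. closedin (top_of_set M) (F i)) \<and>
              M \<subseteq> (\<Union>i\<le>d. F i) \<and>
              (\<forall>i\<le>d. \<forall>x\<in>M. \<not> (x \<in> F i \<and> A x \<in> F i)))"
proof
  assume "\<exists>F :: nat \<Rightarrow> 'a set.
              (\<forall>i\<le>d. closedin (top_of_set M) (F i)) \<and>
              M \<subseteq> (\<Union>i\<le>d. F i) \<and>
              (\<forall>i\<le>d. \<forall>x\<in>M. \<not> (x \<in> F i \<and> A x \<in> F i))"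
  then obtain F :: "nat \<Rightarrow> 'a set" where "\<forall>i\<le>d. closedin (top_of_set M) (F i)"
    "M \<subseteq> (\<Union>i\<le>d. F i)" "\<forall>i\<le>d. \<forall>x\<in>M. \<not> (x \<in> F i \<and> A x \<in> F i)"
    by blast
  moreover have "M \<noteq> {}" "closed_manifold d M" "free_involution M A" "BU_property d M A"
    using assms by (auto simp: BUT_manifold_def)
  moreover obtain S :: "'a set" where "dim S = d"
    using \<open>M \<noteq> {}\<close> \<open>closed_manifold d M\<close> unfolding closed_manifold_def by blast
  then have "d \<le> DIM('a)"
    using dim_subset_UNIV by blast
  moreover have "A ` M \<subseteq> M"
    using \<open>free_involution M A\<close> by (auto simp: free_involution_def)
  ultimately show False
    by (intro BU_property_no_antipodal_free_closed_cover[of d M A F]) auto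
qed

end
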